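(* Let $N\geq 2$ and let $\Sigma$ be the one-sided shift on $\{0,1,\dots,N-1\}^{\mathbb{N}_0}$, ordered lexicographically. Then $\Sigma$ has no forbidden order patterns of length $L\leq N+1$: for every $L\leq N+1$ and every $\pi\in\mathcal{S}_L$ there is $\omega\in\{0,1,\dots,N-1\}^{\mathbb{N}_0}$ that defines $\pi$.
   Context: $\{0,1,\dots,N-1\}^{\mathbb{N}_0}$ is the set of sequences $\omega=(\omega_0,\omega_1,\dots)$ with $\omega_n\in\{0,\dots,N-1\}$, and $\Sigma(\omega_0,\omega_1,\omega_2,\dots)=(\omega_1,\omega_2,\dots)$. The lexicographic order: $\omega<\omega'$ iff $\omega_0<\omega'_0$, or there is $n\geq1$ with $\omega_k=\omega'_k$ for $k<n$ and $\omega_n<\omega'_n$. $\mathcal{S}_L$ is the set of permutations $\pi=[\pi_0,\dots,\pi_{L-1}]$ of $\{0,\dots,L-1\}$. A sequence $\omega$ defines $\pi$ if $\Sigma^{\pi_0}(\omega)<\Sigma^{\pi_1}(\omega)<\dots<\Sigma^{\pi_{L-1}}(\omega)$. A pattern $\pi\in\mathcal{S}_L$ is forbidden for $\Sigma$ if no $\omega$ defines it. *)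

theory Defs
  imports Main
begin

definition seq_space :: "nat \<Rightarrow> (nat \<Rightarrow> nat) set" where
  "seq_space N = {\<omega>. \<forall>n. \<omega> n < N}"

definition shift :: "(nat \<Rightarrow> nat) \<Rightarrow> (nat \<Rightarrow> nat)" where
  "shift \<omega> = (\<lambda>n. \<omega> (Suc n))"

definition lex_less :: "(nat \<Rightarrow> nat) \<Rightarrow> (nat \<Rightarrow> nat) \<Rightarrow> bool" where
  "lex_less \<omega> \<omega>' \<longleftrightarrow> (\<exists>n. (\<forall>k<n. \<omega> k = \<omega>' k) \<and> \<omega> n < \<omega>' n)"

definition perms :: "nat \<Rightarrow> nat list set" where
  "perms L = {\<pi>. length \<pi> = L \<and> distinct \<pi> \<and> set \<pi> = {0..<L}}"

definition defines_pattern :: "(nat \<Rightarrow> nat) \<Rightarrow> nat list \<Rightarrow> bool" where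
  "defines_pattern \<omega> \<pi> \<longleftrightarrow>
     (\<forall>i. Suc i < length \<pi> \<longrightarrow> lex_less ((shift ^^ (\<pi> ! i)) \<omega>) ((shift ^^ (\<pi> ! Suc i)) \<omega>))"

definition forbidden :: "nat \<Rightarrow> nat list \<Rightarrow> bool" where
  "forbidden N \<pi> \<longleftrightarrow> \<not> (\<exists>\<omega>\<in>seq_space N. defines_pattern \<omega> \<pi>)"

end

theory Submission
  imports Defs
begin

text \<open>
  Label the positions \<open>0, \<dots>, L - 1\<close> with their rank in \<open>\<pi>\<close>, i.e. \<open>\<omega> (\<pi> ! t) = t\<close>:
  then the shifts \<open>(shift ^^ (\<pi> ! t)) \<omega>\<close> are ordered by their first symbols, which needs \<open>L\<close>
  symbols. For \<open>L = N + 1\<close> the ranks \<open>k\<close> and \<open>k + 1\<close> must share a symbol, and the comparison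
  of that pair is decided one step later, by the shifts starting at \<open>\<pi> ! k + 1\<close> and
  \<open>\<pi> ! (k + 1) + 1\<close>. With a zero tail this works for \<open>k\<close> the position of the maximum \<open>L - 1\<close>,
  unless the maximum comes first and is followed by \<open>L - 2\<close>, where \<open>k = 1\<close> does. If the
  maximum comes last, complementing all symbols reverses the lexicographic order and so
  reduces to the case where it comes first.
\<close>

lemma funpow_shift: "(shift ^^ a) \<omega> = (\<lambda>n. \<omega> (a + n))"
  by (induction a) (auto simp: shift_def)

lemma lex_less_funpow_shift_head:
  "\<omega> a < \<omega> b \<Longrightarrow> lex_less ((shift ^^ a) \<omega>) ((shift ^^ b) \<omega>)"
  unfolding lex_less_def funpow_shift by (rule exI[of _ 0]) auto

lemma lex_less_funpow_shift_Suc: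
  assumes "\<omega> a = \<omega> b" and "lex_less ((shift ^^ Suc a) \<omega>) ((shift ^^ Suc b) \<omega>)"
  shows "lex_less ((shift ^^ a) \<omega>) ((shift ^^ b) \<omega>)"
proof -
  from assms(2) obtain n where
    agree: "\<forall>k<n. \<omega> (Suc a + k) = \<omega> (Suc b + k)" and less: "\<omega> (Suc a + n) < \<omega> (Suc b + n)"
    unfolding lex_less_def funpow_shift by auto
  have "\<forall>k<Suc n. \<omega> (a + k) = \<omega> (b + k)"
    using agree assms(1) by (auto simp: less_Suc_eq_0_disj)
  with less show ?thesis
    unfolding lex_less_def funpow_shift by (intro exI[of _ "Suc n"]) auto
qed

lemma lex_less_if_pointwise_le:
  assumes "\<And>n. u n \<le> v n" and "u n < v n"
  shows "lex_less u v"
proof -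
  define n0 where "n0 = (LEAST n. u n \<noteq> v n)"
  have "u n0 \<noteq> v n0"
    unfolding n0_def by (rule LeastI[of _ n]) (use assms(2) in simp)
  moreover have "\<forall>k<n0. u k = v k"
    using not_less_Least unfolding n0_def by blast
  ultimately show ?thesis
    unfolding lex_less_def using assms(1) le_neq_implies_less by blast
qed

definition complement :: "nat \<Rightarrow> (nat \<Rightarrow> nat) \<Rightarrow> nat \<Rightarrow> nat" where
  "complement N \<omega> = (\<lambda>n. N - 1 - \<omega> n)"

lemma complement_in_seq_space: "complement N \<omega> \<in> seq_space N" if "N \<ge> 1"
  using that by (simp add: complement_def seq_space_def)

lemma funpow_shift_complement: "(shift ^^ a) (complement N \<omega>) = complement N ((shift ^^ a) \<omega>)"
  by (simp add: funpow_shift complement_def)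

lemma lex_less_complement:
  assumes "\<omega> \<in> seq_space N" and "lex_less \<omega>' \<omega>"
  shows "lex_less (complement N \<omega>) (complement N \<omega>')"
proof -
  from assms(2) obtain n where "\<forall>k<n. \<omega>' k = \<omega> k" and "\<omega>' n < \<omega> n"
    unfolding lex_less_def by blast
  moreover have "\<omega> n < N"
    using assms(1) by (simp add: seq_space_def)
  ultimately show ?thesis
    unfolding lex_less_def complement_def by (intro exI[of _ n]) auto
qed

lemma rev_in_perms: "\<pi> \<in> perms L \<Longrightarrow> rev \<pi> \<in> perms L"
  by (simp add: perms_def)

lemma defines_pattern_complement_rev:
  assumes "\<omega> \<in> seq_space N" and "defines_pattern \<omega> (rev \<pi>)"
  shows "defines_pattern (complement N \<omega>) \<pi>"
  unfolding defines_pattern_def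
proof (intro allI impI)
  fix i assume i: "Suc i < length \<pi>"
  define j where "j = length \<pi> - Suc (Suc i)"
  have "Suc j < length (rev \<pi>)" and "rev \<pi> ! j = \<pi> ! Suc i" and "rev \<pi> ! Suc j = \<pi> ! i"
    using i by (auto simp: j_def rev_nth Suc_diff_Suc)
  with assms(2) have "lex_less ((shift ^^ (\<pi> ! Suc i)) \<omega>) ((shift ^^ (\<pi> ! i)) \<omega>)"
    unfolding defines_pattern_def by metis
  moreover have "(shift ^^ a) \<omega> \<in> seq_space N" for a
    using assms(1) by (simp add: seq_space_def funpow_shift)
  ultimately show "lex_less ((shift ^^ (\<pi> ! i)) (complement N \<omega>)) ((shift ^^ (\<pi> ! Suc i)) (complement N \<omega>))"
    by (simp add: funpow_shift_complement lex_less_complement)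
qed

definition rank :: "nat list \<Rightarrow> nat \<Rightarrow> nat" where
  "rank \<pi> m = (LEAST t. t < length \<pi> \<and> \<pi> ! t = m)"

lemma rank_nth: "distinct \<pi> \<Longrightarrow> t < length \<pi> \<Longrightarrow> rank \<pi> (\<pi> ! t) = t"
  unfolding rank_def by (rule Least_equality) (auto simp: nth_eq_iff_index_eq leI)

lemma rank_less_and_nth_rank:
  assumes "\<pi> \<in> perms L" and "m < L"
  shows "rank \<pi> m < L" and "\<pi> ! rank \<pi> m = m"
proof -
  from assms have "m \<in> set \<pi>"
    by (simp add: perms_def)
  then obtain t where "t < length \<pi>" and "\<pi> ! t = m"
    by (auto simp: in_set_conv_nth)
  then show "rank \<pi> m < L" and "\<pi> ! rank \<pi> m = m"
    using assms(1) rank_nth[of \<pi> t] by (auto simp: perms_def)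
qed

definition merge :: "nat \<Rightarrow> nat \<Rightarrow> nat" where
  "merge k t = (if t \<le> k then t else t - 1)"

definition merged_word :: "nat list \<Rightarrow> nat \<Rightarrow> nat \<Rightarrow> nat \<Rightarrow> nat" where
  "merged_word \<pi> k c m = (if m < length \<pi> then merge k (rank \<pi> m) else c)"

lemma merged_word_nth:
  "\<pi> \<in> perms L \<Longrightarrow> t < L \<Longrightarrow> merged_word \<pi> k c (\<pi> ! t) = merge k t"
  using nth_mem[of t \<pi>] by (auto simp: merged_word_def perms_def rank_nth)

lemma merged_word_le:
  assumes "\<pi> \<in> perms L"
  shows "merged_word \<pi> k c m \<le> max c (if Suc k < L then L - 2 else L - 1)"
proof (cases "m < L")
  case True
  then have "rank \<pi> m < L"
    using assms by (rule rank_less_and_nth_rank(1)[rotated])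
  with True assms show ?thesis
    unfolding merged_word_def merge_def perms_def by (simp split: if_split) linarith
next
  case False
  with assms show ?thesis
    by (simp add: merged_word_def perms_def)
qed

lemma defines_pattern_merged_word:
  assumes "\<pi> \<in> perms L"
    and "Suc k < L \<Longrightarrow> lex_less ((shift ^^ Suc (\<pi> ! k)) (merged_word \<pi> k c))
                                ((shift ^^ Suc (\<pi> ! Suc k)) (merged_word \<pi> k c))"
  shows "defines_pattern (merged_word \<pi> k c) \<pi>"
  unfolding defines_pattern_def
proof (intro allI impI)
  fix i assume "Suc i < length \<pi>"
  then have i: "Suc i < L"
    using assms(1) by (simp add: perms_def)
  show "lex_less ((shift ^^ (\<pi> ! i)) (merged_word \<pi> k c)) ((shift ^^ (\<pi> ! Suc i)) (merged_word \<pi> k c))"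
  proof (cases "i = k")
    case True
    have "merged_word \<pi> k c (\<pi> ! i) = merged_word \<pi> k c (\<pi> ! Suc i)"
      using True i assms(1) by (simp add: merged_word_nth merge_def)
    moreover have "Suc k < L"
      using True i by simp
    ultimately show ?thesis
      using True assms(2) by (blast intro: lex_less_funpow_shift_Suc)
  next
    case False
    have "merged_word \<pi> k c (\<pi> ! i) < merged_word \<pi> k c (\<pi> ! Suc i)"
      using False i assms(1) by (simp add: merged_word_nth merge_def)
    then show ?thesis
      by (rule lex_less_funpow_shift_head)
  qed
qed

lemma lex_less_merged_word_after_max:
  assumes \<pi>: "\<pi> \<in> perms L" and p: "\<pi> ! p = L - 1" "Suc p < L"
    and not_special: "p = 0 \<Longrightarrow> \<pi> ! 1 \<noteq> L - 2"
  shows "lex_less ((shift ^^ Suc (\<pi> ! p)) (merged_word \<pi> p 0))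
                  ((shift ^^ Suc (\<pi> ! Suc p)) (merged_word \<pi> p 0))"
proof -
  let ?w = "merged_word \<pi> p 0"
  define j where "j = \<pi> ! Suc p"
  have dist: "distinct \<pi>" and len: "length \<pi> = L"
    using \<pi> by (auto simp: perms_def)
  have "j \<noteq> L - 1"
    using p len nth_eq_iff_index_eq[OF dist, of p "Suc p"] by (auto simp: j_def)
  moreover have "j < L"
    using \<pi> p(2) by (auto simp: j_def perms_def)
  ultimately have j: "Suc j < L" by linarith
  obtain n where "0 < ?w (Suc j + n)"
  proof (cases "p = 0")
    case True
    define q where "q = rank \<pi> (Suc j)"
    have "j \<noteq> L - 2"
      using not_special True by (simp add: j_def)
    with j have "Suc j \<noteq> L - 1"
      by linarith
    have q: "\<pi> ! q = Suc j"
      using rank_less_and_nth_rank(2)[OF \<pi> j] by (simp add: q_def)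
    have "q \<noteq> 0"
      using q p True \<open>Suc j \<noteq> L - 1\<close> by (metis One_nat_def)
    moreover have "q \<noteq> 1"
      using q by (auto simp: j_def True)
    ultimately have "0 < ?w (Suc j + 0)"
      using j len by (simp add: merged_word_def merge_def q_def)
    then show ?thesis ..
  next
    case False
    have "?w (L - 1) = p"
      using merged_word_nth[OF \<pi>, of p] p by (simp add: merge_def)
    moreover have "Suc j + (L - 1 - Suc j) = L - 1"
      using j by linarith
    ultimately have "0 < ?w (Suc j + (L - 1 - Suc j))"
      using False by (simp only:)
    then show ?thesis ..
  qed
  moreover have "(shift ^^ L) ?w = (\<lambda>_. 0)"
    using len by (simp add: funpow_shift merged_word_def)
  ultimately show ?thesis
    using p j unfolding j_def[symmetric]
    by (intro lex_less_if_pointwise_le[of _ _ n]) (simp_all add: funpow_shift del: funpow.simps)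
qed

lemma lex_less_merged_word_max_first_second:
  assumes \<pi>: "\<pi> \<in> perms L" and "2 < L" and first: "\<pi> ! 0 = L - 1" and second: "\<pi> ! 1 = L - 2"
  shows "lex_less ((shift ^^ Suc (\<pi> ! 1)) (merged_word \<pi> 1 0))
                  ((shift ^^ Suc (\<pi> ! 2)) (merged_word \<pi> 1 0))"
proof -
  let ?w = "merged_word \<pi> 1 0"
  define j where "j = \<pi> ! 2"
  have dist: "distinct \<pi>" and len: "length \<pi> = L"
    using \<pi> by (auto simp: perms_def)
  have "j < L"
    using \<pi> \<open>2 < L\<close> by (auto simp: j_def perms_def)
  moreover have "j \<noteq> L - 1" and "j \<noteq> L - 2"
    using first second \<open>2 < L\<close> len nth_eq_iff_index_eq[OF dist, of 2 0] nth_eq_iff_index_eq[OF dist, of 2 1]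
    by (auto simp: j_def)
  ultimately have j: "Suc j < L" "Suc j \<noteq> L - 1"
    by linarith+
  define q where "q = rank \<pi> (Suc j)"
  have q: "\<pi> ! q = Suc j"
    using rank_less_and_nth_rank(2)[OF \<pi> j(1)] by (simp add: q_def)
  then have "q \<noteq> 0"
    using first j(2) by metis
  then have "?w (L - 1) < ?w (Suc j)"
    using merged_word_nth[OF \<pi>, of 0 1 0] first j(1) len \<open>2 < L\<close>
    by (simp add: merged_word_def merge_def q_def)
  moreover have "Suc (\<pi> ! 1) = L - 1"
    using second \<open>2 < L\<close> by simp
  ultimately show ?thesis
    unfolding j_def[symmetric] by (metis lex_less_funpow_shift_head)
qed

lemma ex_defining_word_max_not_last:
  assumes \<pi>: "\<pi> \<in> perms (Suc N)" and "2 \<le> N" and not_last: "rank \<pi> N < N"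
  shows "\<exists>\<omega>\<in>seq_space N. defines_pattern \<omega> \<pi>"
proof -
  define p where "p = rank \<pi> N"
  have p: "\<pi> ! p = Suc N - 1" "Suc p < Suc N"
    using rank_less_and_nth_rank(2)[OF \<pi>, of N] not_last by (simp_all add: p_def)
  obtain k where k: "Suc k < Suc N"
    and lex: "lex_less ((shift ^^ Suc (\<pi> ! k)) (merged_word \<pi> k 0))
                       ((shift ^^ Suc (\<pi> ! Suc k)) (merged_word \<pi> k 0))"
  proof (cases "p = 0 \<and> \<pi> ! 1 = Suc N - 2")
    case True
    then show ?thesis
      using that[of 1] lex_less_merged_word_max_first_second[OF \<pi>] p \<open>2 \<le> N\<close>
      by (simp add: numeral_2_eq_2)
  next
    case False
    then have "lex_less ((shift ^^ Suc (\<pi> ! p)) (merged_word \<pi> p 0))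
                        ((shift ^^ Suc (\<pi> ! Suc p)) (merged_word \<pi> p 0))"
      by (intro lex_less_merged_word_after_max[OF \<pi> p]) auto
    with p(2) show ?thesis
      by (rule that)
  qed
  have "merged_word \<pi> k 0 m < N" for m
    using merged_word_le[OF \<pi>, of k 0 m] k \<open>2 \<le> N\<close> by simp
  then have "merged_word \<pi> k 0 \<in> seq_space N"
    by (simp add: seq_space_def)
  moreover have "defines_pattern (merged_word \<pi> k 0) \<pi>"
    using defines_pattern_merged_word[OF \<pi>] lex by blast
  ultimately show ?thesis
    by blast
qed

lemma ex_defining_word_length_le:
  assumes \<pi>: "\<pi> \<in> perms L" and "L \<le> N" and "0 < N"
  shows "\<exists>\<omega>\<in>seq_space N. defines_pattern \<omega> \<pi>"
proof -
  have "merged_word \<pi> L 0 m < N" for m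
    using merged_word_le[OF \<pi>, of L 0 m] \<open>L \<le> N\<close> \<open>0 < N\<close> by simp
  then have "merged_word \<pi> L 0 \<in> seq_space N"
    by (simp add: seq_space_def)
  moreover have "defines_pattern (merged_word \<pi> L 0) \<pi>"
    by (rule defines_pattern_merged_word[OF \<pi>]) simp
  ultimately show ?thesis
    by blast
qed

lemma ex_defining_word_Suc:
  assumes \<pi>: "\<pi> \<in> perms (Suc N)" and "2 \<le> N"
  shows "\<exists>\<omega>\<in>seq_space N. defines_pattern \<omega> \<pi>"
proof (cases "rank \<pi> N < N")
  case True
  with \<pi> \<open>2 \<le> N\<close> show ?thesis
    by (rule ex_defining_word_max_not_last)
next
  case False
  then have "\<pi> ! N = N"
    using rank_less_and_nth_rank[OF \<pi>, of N] by (simp add: less_Suc_eq)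
  then have "rank (rev \<pi>) N < N"
    using \<pi> \<open>2 \<le> N\<close> rank_nth[of "rev \<pi>" 0] by (simp add: perms_def rev_nth)
  then obtain \<omega> where "\<omega> \<in> seq_space N" and "defines_pattern \<omega> (rev \<pi>)"
    using ex_defining_word_max_not_last[OF rev_in_perms[OF \<pi>] \<open>2 \<le> N\<close>] by blast
  then have "defines_pattern (complement N \<omega>) \<pi>"
    by (rule defines_pattern_complement_rev)
  moreover have "complement N \<omega> \<in> seq_space N"
    using \<open>2 \<le> N\<close> by (simp add: complement_in_seq_space)
  ultimately show ?thesis
    by blast
qed

theorem proposition3:
  fixes N L :: nat
  assumes "N \<ge> 2" and "L \<le> N + 1"
  shows "\<forall>\<pi>\<in>perms L. \<exists>\<omega>\<in>seq_space N. defines_pattern \<omega> \<pi>"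
proof
  fix \<pi> assume "\<pi> \<in> perms L"
  show "\<exists>\<omega>\<in>seq_space N. defines_pattern \<omega> \<pi>"
  proof (cases "L \<le> N")
    case True
    with assms(1) show ?thesis
      by (intro ex_defining_word_length_le[OF \<open>\<pi> \<in> perms L\<close>]) simp_all
  next
    case False
    with assms(2) have "L = Suc N"
      by simp
    with \<open>\<pi> \<in> perms L\<close> assms(1) show ?thesis
      using ex_defining_word_Suc by blast
  qed
qed

end
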